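(* Let $\beta$ be a Pisot number, let $l\in(-1,0]$, $r=l+1$, and let $d$ be the $(-\beta,l)$-expansion. Then $d(x)$ is eventually periodic for every $x\in[l,r)\cap\mathbb{Q}(\beta)$.
   Context: For $\beta>1$ and $l\in(-1,0]$, $r=l+1$, the $(-\beta,l)$-transformation is $T:[l,r)\to[l,r)$, $T(x)=-\beta x-\lfloor -\beta x-l\rfloor$. The $(-\beta,l)$-expansion of $x\in[l,r)$ is the integer sequence $d(x)=x_1x_2x_3\cdots$ with $x_i=\lfloor -\beta T^{i-1}(x)-l\rfloor$. A Pisot number is a real algebraic integer $>1$ all of whose other conjugates have modulus $<1$. *)

theory Defs
  imports "HOL-Computational_Algebra.Polynomial" "HOL-Computational_Algebra.Factorial_Ring" Complex_Main
begin

text \<open>Pisot number: a real algebraic integer > 1 whose other conjugates all have modulus < 1.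
  The minimal polynomial of an algebraic integer is a monic irreducible integer polynomial.\<close>
definition pisot :: "real \<Rightarrow> bool" where
  "pisot \<beta> \<longleftrightarrow> \<beta> > 1 \<and>
     (\<exists>p :: int poly. lead_coeff p = 1 \<and> irreducible p \<and>
        poly (map_poly of_int p) (complex_of_real \<beta>) = 0 \<and>
        (\<forall>z::complex. poly (map_poly of_int p) z = 0 \<and> z \<noteq> complex_of_real \<beta> \<longrightarrow> cmod z < 1))"

definition QQ_ext :: "real \<Rightarrow> real set" where
  "QQ_ext \<beta> = {poly (map_poly of_rat p) \<beta> / poly (map_poly of_rat q) \<beta> | p q :: rat poly.
                  poly (map_poly of_rat q) \<beta> \<noteq> 0}"

definition negT :: "real \<Rightarrow> real \<Rightarrow> real \<Rightarrow> real" where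
  "negT \<beta> l x = - \<beta> * x - of_int \<lfloor>- \<beta> * x - l\<rfloor>"

text \<open>The (-beta,l)-expansion; index n (from 0) is the digit x_{n+1}.\<close>
definition negexp :: "real \<Rightarrow> real \<Rightarrow> real \<Rightarrow> nat \<Rightarrow> int" where
  "negexp \<beta> l x n = \<lfloor>- \<beta> * ((negT \<beta> l ^^ n) x) - l\<rfloor>"

definition eventually_periodic :: "(nat \<Rightarrow> 'a) \<Rightarrow> bool" where
  "eventually_periodic s \<longleftrightarrow> (\<exists>N p. p > 0 \<and> (\<forall>n\<ge>N. s (n + p) = s n))"

end

theory Submission
  imports Defs "Berlekamp_Zassenhaus.Factorize_Int_Poly"
begin

text \<open>
  Write \<open>x = P(\<beta>) / Q(\<beta>)\<close> with integer polynomials \<open>P\<close>, \<open>Q\<close>. Since \<open>T y = -\<beta> y - a\<close> with an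
  integer digit \<open>a\<close>, we get \<open>T\<^sup>n x = U\<^sub>n(\<beta>) / Q(\<beta>)\<close> for the integer polynomials
  \<open>U\<^sub>n\<^sub>+\<^sub>1 = -X U\<^sub>n - a\<^sub>n Q\<close>. At \<open>\<beta>\<close> the values \<open>U\<^sub>n(\<beta>)\<close> are bounded because the orbit stays in
  \<open>[l, l + 1)\<close>; at every other conjugate \<open>z\<close> we have \<open>|z| < 1\<close> and the digits are bounded, so
  \<open>U\<^sub>n(z)\<close> is bounded too. Reducing \<open>U\<^sub>n\<close> modulo the minimal polynomial of \<open>\<beta>\<close> yields integer
  polynomials of degree below \<open>deg p\<close> that are bounded at the \<open>deg p\<close> distinct roots of \<open>p\<close>;
  Lagrange interpolation bounds their coefficients, so there are only finitely many of them.
  Two of them coincide, which forces \<open>T\<^sup>m x = T\<^sup>n x\<close> for some \<open>m < n\<close>.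
\<close>

hide_const (open) module.smult \<comment> \<open>from HOL-Algebra; it would otherwise capture \<open>smult\<close>\<close>

lemma card_roots_irreducible_int_poly:
  fixes p :: "int poly"
  assumes "irreducible p"
  shows "card {z::complex. poly (of_int_poly p) z = 0} = degree p"
proof -
  interpret field_hom_0' "of_rat :: rat \<Rightarrow> complex" ..
  have "square_free (of_int_poly p :: rat poly)"
    by (rule square_free_int_rat[OF irreducible_imp_square_free[OF assms]])
  then have "square_free (map_poly of_rat (of_int_poly p :: rat poly) :: complex poly)"
    by (simp add: square_free_map_poly)
  then have "rsquarefree (of_int_poly p :: complex poly)"
    by (intro square_free_rsquarefree) (simp add: map_poly_map_poly o_def)
  moreover have "(of_int_poly p :: complex poly) \<noteq> 0" using assms by auto
  ultimately show ?thesis by (simp add: rsquarefree_card_degree)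
qed

lemma finite_int_polys_bounded_coeffs:
  "finite {S :: int poly. degree S < d \<and> (\<forall>k. \<bar>coeff S k\<bar> \<le> M)}"
proof (rule finite_subset)
  show "{S :: int poly. degree S < d \<and> (\<forall>k. \<bar>coeff S k\<bar> \<le> M)}
          \<subseteq> Poly ` {xs. set xs \<subseteq> {-M..M} \<and> length xs \<le> d}"
  proof
    fix S :: "int poly" assume S: "S \<in> {S. degree S < d \<and> (\<forall>k. \<bar>coeff S k\<bar> \<le> M)}"
    have "length (coeffs S) \<le> d" using S by (cases "S = 0") (auto simp: length_coeffs_degree)
    moreover have "coeff S k \<in> {-M..M}" for k using S by (auto simp: abs_le_iff dest: spec[of _ k])
    then have "set (coeffs S) \<subseteq> {-M..M}" by (auto simp: coeffs_def)
    ultimately show "S \<in> Poly ` {xs. set xs \<subseteq> {-M..M} \<and> length xs \<le> d}"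
      by (intro image_eqI[of _ _ "coeffs S"]) auto
  qed
  show "finite (Poly ` {xs. set xs \<subseteq> {-M..M} \<and> length xs \<le> d})"
    by (intro finite_imageI finite_lists_length_le) auto
qed

lemma coeff_eq_sum_lagrange_basis_poly:
  fixes R :: "'a::field poly"
  assumes "distinct zs" and "degree R < length zs"
  shows "coeff R k = (\<Sum>z\<in>set zs. poly R z * coeff (lagrange_basis_poly zs z) k)"
proof -
  let ?xs_ys = "map (\<lambda>z. (z, poly R z)) zs"
  have "R = lagrange_interpolation_poly ?xs_ys"
  proof (rule uniqueness_of_interpolation_point_list[of ?xs_ys])
    show "distinct (map fst ?xs_ys)" using assms(1) by (simp add: o_def)
    show "poly (lagrange_interpolation_poly ?xs_ys) z = w" if "(z, w) \<in> set ?xs_ys" for z w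
      using assms(1) that by (intro lagrange_interpolation_poly) (auto simp: o_def)
    show "degree (lagrange_interpolation_poly ?xs_ys) < length ?xs_ys"
      using assms(2) degree_lagrange_interpolation_poly[of ?xs_ys] by simp
  qed (use assms(2) in auto)
  also have "\<dots> = (\<Sum>z\<in>set zs. smult (poly R z) (lagrange_basis_poly zs z))"
    using assms(1) by (simp add: lagrange_interpolation_poly_def o_def sum_list_distinct_conv_sum_set)
  finally have "coeff R k = coeff (\<Sum>z\<in>set zs. smult (poly R z) (lagrange_basis_poly zs z)) k"
    by (rule arg_cong)
  then show ?thesis by (simp add: coeff_sum)
qed

lemma finite_int_polys_bounded_on_points:
  fixes Z :: "'a::real_normed_field set"
  assumes "finite Z"
  shows "finite {S :: int poly. degree S < card Z \<and> (\<forall>z\<in>Z. norm (poly (of_int_poly S) z) \<le> B)}"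
proof -
  obtain zs where zs: "distinct zs" "set zs = Z" using finite_distinct_list[OF assms] by blast
  define C where "C = (\<Sum>k<card Z. \<Sum>z\<in>Z. \<bar>B\<bar> * norm (coeff (lagrange_basis_poly zs z) k))"
  have "\<bar>coeff S k\<bar> \<le> \<lceil>C\<rceil>"
    if S: "degree S < card Z" "\<forall>z\<in>Z. norm (poly (of_int_poly S) z) \<le> B" for S k
  proof (cases "k < card Z")
    case False
    then have "coeff S k = 0" using S(1) by (intro coeff_eq_0) auto
    moreover have "0 \<le> C" unfolding C_def by (intro sum_nonneg) auto
    ultimately show ?thesis by simp
  next
    case True
    have "\<bar>real_of_int (coeff S k)\<bar> = norm (coeff (of_int_poly S :: 'a poly) k)"
      by simp
    also have "\<dots> = norm (\<Sum>z\<in>Z. poly (of_int_poly S) z * coeff (lagrange_basis_poly zs z) k)"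
      using S(1) zs by (subst coeff_eq_sum_lagrange_basis_poly) (auto simp: distinct_card)
    also have "\<dots> \<le> (\<Sum>z\<in>Z. \<bar>B\<bar> * norm (coeff (lagrange_basis_poly zs z) k))"
      using S(2) by (intro order_trans[OF norm_sum] sum_mono)
        (auto simp: norm_mult intro!: mult_right_mono)
    also have "\<dots> \<le> C"
      unfolding C_def using True by (intro member_le_sum sum_nonneg) auto
    finally show ?thesis by linarith
  qed
  then have "{S :: int poly. degree S < card Z \<and> (\<forall>z\<in>Z. norm (poly (of_int_poly S) z) \<le> B)}
     \<subseteq> {S. degree S < card Z \<and> (\<forall>k. \<bar>coeff S k\<bar> \<le> \<lceil>C\<rceil>)}" by blast
  then show ?thesis using finite_int_polys_bounded_coeffs finite_subset by blast
qed

lemma int_poly_residue_on_roots: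
  fixes p U :: "int poly"
  assumes "monic p" and "0 < degree p"
  shows "\<exists>S. degree S < degree p \<and>
    (\<forall>z::'a::comm_ring_1. poly (of_int_poly p) z = 0 \<longrightarrow> poly (of_int_poly S) z = poly (of_int_poly U) z)"
proof -
  obtain q r where qr: "pseudo_divmod U p = (q, r)" by force
  have "p \<noteq> 0" using assms(1) by auto
  with pseudo_divmod[OF this qr] assms(1) have "U = p * q + r" and "r = 0 \<or> degree r < degree p"
    by auto
  with assms(2) show ?thesis by (intro exI[of _ r]) (auto simp: hom_distribs)
qed

lemma bounded_on_roots_imp_agree_on_roots:
  fixes p :: "int poly" and U :: "nat \<Rightarrow> int poly"
  defines "Z \<equiv> {z::'a::real_normed_field. poly (of_int_poly p) z = 0}"
  assumes "monic p" and "0 < degree p" and "card Z = degree p"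
    and bounded: "\<And>z. z \<in> Z \<Longrightarrow> \<exists>M. \<forall>n. norm (poly (of_int_poly (U n)) z) \<le> M"
  shows "\<exists>m n. m < n \<and> (\<forall>z\<in>Z. poly (of_int_poly (U m)) z = poly (of_int_poly (U n)) z)"
proof -
  have "p \<noteq> 0" using assms(2) by auto
  then have "finite Z" unfolding Z_def by (intro poly_roots_finite) simp
  have "\<forall>z\<in>Z. \<exists>M. \<forall>n. norm (poly (of_int_poly (U n)) z) \<le> M" using bounded by blast
  from bchoice[OF this] obtain M where M: "\<forall>z\<in>Z. \<forall>n. norm (poly (of_int_poly (U n)) z) \<le> M z"
    by blast
  define B where "B = (\<Sum>z\<in>Z. M z)"
  have "0 \<le> M z" if "z \<in> Z" for z
  proof -
    have "norm (poly (of_int_poly (U 0)) z) \<le> M z" using M that by blast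
    then show ?thesis by (rule order_trans[OF norm_ge_zero])
  qed
  then have M_le_B: "M z \<le> B" if "z \<in> Z" for z
    unfolding B_def using \<open>finite Z\<close> that by (intro member_le_sum) auto
  have UB: "norm (poly (of_int_poly (U n)) z) \<le> B" if "z \<in> Z" for n z
  proof -
    have "norm (poly (of_int_poly (U n)) z) \<le> M z" using M that by blast
    then show ?thesis using M_le_B[OF that] by (rule order_trans)
  qed
  have "\<exists>S. degree S < degree p \<and> (\<forall>z\<in>Z. poly (of_int_poly S) z = poly (of_int_poly (U n)) z)" for n
    using int_poly_residue_on_roots[OF assms(2,3), of "U n", where 'a = 'a] unfolding Z_def by blast
  then obtain S where S: "\<And>n. degree (S n) < degree p"
    "\<And>n z. z \<in> Z \<Longrightarrow> poly (of_int_poly (S n)) z = poly (of_int_poly (U n)) z"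
    using choice[of "\<lambda>n S. degree S < degree p \<and> (\<forall>z\<in>Z. poly (of_int_poly S) z = poly (of_int_poly (U n)) z)"]
    by blast
  have "range S \<subseteq> {S. degree S < card Z \<and> (\<forall>z\<in>Z. norm (poly (of_int_poly S) z) \<le> B)}"
    using S UB assms(4) by auto
  then have "finite (range S)"
    using finite_int_polys_bounded_on_points[OF \<open>finite Z\<close>] finite_subset by blast
  then have "\<not> inj S"
    using finite_imageD infinite_UNIV_nat by blast
  then obtain i j where "i \<noteq> j" "S i = S j"
    unfolding inj_def by blast
  then obtain m n where "m < n" "S m = S n"
    by (cases "i < j") (auto dest: sym simp: neq_iff)
  then show ?thesis
    using S(2) by metis
qed

primrec orbit_poly :: "(nat \<Rightarrow> int) \<Rightarrow> int poly \<Rightarrow> int poly \<Rightarrow> nat \<Rightarrow> int poly" where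
  "orbit_poly a P Q 0 = P"
| "orbit_poly a P Q (Suc n) = - pCons 0 (orbit_poly a P Q n) - smult (a n) Q"

lemma poly_orbit_poly_Suc:
  "poly (of_int_poly (orbit_poly a P Q (Suc n))) (z::'a::comm_ring_1)
     = - z * poly (of_int_poly (orbit_poly a P Q n)) z - of_int (a n) * poly (of_int_poly Q) z"
  by (simp add: of_int_poly_hom.hom_minus of_int_poly_hom.hom_uminus of_int_hom.map_poly_hom_smult of_int_hom.map_poly_pCons_hom)

lemma poly_orbit_poly:
  fixes z :: "'a::comm_ring_1"
  assumes "y 0 * poly (of_int_poly Q) z = poly (of_int_poly P) z"
    and "\<And>n. y (Suc n) = - z * y n - of_int (a n)"
  shows "poly (of_int_poly (orbit_poly a P Q n)) z = y n * poly (of_int_poly Q) z"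
proof (induction n)
  case 0
  then show ?case using assms(1) by simp
next
  case (Suc n)
  then show ?case by (simp only: poly_orbit_poly_Suc assms(2)) (simp add: algebra_simps)
qed

lemma orbit_poly_bounded_inside_unit_disc:
  fixes z :: "'a::real_normed_field"
  assumes "norm z < 1" and "\<And>n. \<bar>a n\<bar> \<le> A"
  shows "\<exists>M. \<forall>n. norm (poly (of_int_poly (orbit_poly a P Q n)) z) \<le> M"
proof -
  define M where "M = max (norm (poly (of_int_poly P) z)) (A * norm (poly (of_int_poly Q) z) / (1 - norm z))"
  have "A * norm (poly (of_int_poly Q) z) = (1 - norm z) * (A * norm (poly (of_int_poly Q) z) / (1 - norm z))"
    using assms(1) by simp
  also have "\<dots> \<le> (1 - norm z) * M"
    using assms(1) unfolding M_def by (intro mult_left_mono) auto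
  finally have "A * norm (poly (of_int_poly Q) z) \<le> (1 - norm z) * M" .
  then have step: "norm z * w + A * norm (poly (of_int_poly Q) z) \<le> M" if "w \<le> M" for w
    using that assms(1) mult_left_mono[OF that, of "norm z"] by (simp add: algebra_simps)
  have "norm (poly (of_int_poly (orbit_poly a P Q n)) z) \<le> M" for n
  proof (induction n)
    case 0
    then show ?case by (simp add: M_def)
  next
    case (Suc n)
    have "norm (poly (of_int_poly (orbit_poly a P Q (Suc n))) z)
        \<le> norm z * norm (poly (of_int_poly (orbit_poly a P Q n)) z) + \<bar>a n\<bar> * norm (poly (of_int_poly Q) z)"
      unfolding poly_orbit_poly_Suc
      by (rule order_trans[OF norm_triangle_ineq4]) (simp add: norm_mult)
    also have "\<dots> \<le> norm z * norm (poly (of_int_poly (orbit_poly a P Q n)) z) + A * norm (poly (of_int_poly Q) z)"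
      using assms(2)[of n] by (intro add_left_mono mult_right_mono) auto
    also have "\<dots> \<le> M" using Suc by (rule step)
    finally show ?case .
  qed
  then show ?thesis by blast
qed

lemma negT_mem: "l \<le> negT \<beta> l x \<and> negT \<beta> l x < l + 1"
  unfolding negT_def by linarith

lemma negT_funpow_mem:
  assumes "l \<le> x" and "x < l + 1"
  shows "l \<le> (negT \<beta> l ^^ n) x \<and> (negT \<beta> l ^^ n) x < l + 1"
  using assms negT_mem by (cases n) auto

lemma negT_funpow_Suc:
  "(negT \<beta> l ^^ Suc n) x = - \<beta> * (negT \<beta> l ^^ n) x - of_int (negexp \<beta> l x n)"
  by (simp add: negT_def negexp_def)

lemma abs_negT_funpow_le_1:
  assumes "-1 < l" "l \<le> 0" and "l \<le> x" "x < l + 1"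
  shows "\<bar>(negT \<beta> l ^^ n) x\<bar> \<le> 1"
  using negT_funpow_mem[OF assms(3,4), where \<beta> = \<beta> and n = n] assms(1,2) by linarith

lemma abs_negexp_le:
  assumes "0 \<le> \<beta>" and "-1 < l" "l \<le> 0" and "l \<le> x" "x < l + 1"
  shows "\<bar>negexp \<beta> l x n\<bar> \<le> \<lceil>\<beta>\<rceil> + 2"
proof -
  let ?y = "(negT \<beta> l ^^ n) x"
  have "\<bar>\<beta> * ?y\<bar> \<le> \<beta>"
    using abs_negT_funpow_le_1[OF assms(2-5)] assms(1) by (simp add: abs_mult mult_left_le)
  then have "real_of_int \<bar>negexp \<beta> l x n\<bar> \<le> \<beta> + 2"
    using assms(2,3) unfolding negexp_def by linarith
  then have "real_of_int \<bar>negexp \<beta> l x n\<bar> \<le> real_of_int (\<lceil>\<beta>\<rceil> + 2)"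
    by simp (use le_of_int_ceiling[of \<beta>] in linarith)
  then show ?thesis by (simp only: of_int_le_iff)
qed

lemma eventually_periodic_if_orbit_repeats:
  fixes f :: "'a \<Rightarrow> 'a"
  assumes "m < n" and "(f ^^ m) x = (f ^^ n) x"
  shows "eventually_periodic (\<lambda>k. g ((f ^^ k) x))"
  unfolding eventually_periodic_def
proof (intro exI conjI allI impI)
  show "0 < n - m" using assms(1) by simp
  fix k assume "m \<le> k"
  then obtain j where "k = m + j" using le_Suc_ex by blast
  then have "k + (n - m) = j + n" and "k = j + m" using assms(1) by simp_all
  then show "g ((f ^^ (k + (n - m))) x) = g ((f ^^ k) x)"
    using assms(2) by (simp add: funpow_add)
qed

lemma poly_of_rat_poly_eq_int_poly_div:
  assumes "rat_to_int_poly q = (c, P)"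
  shows "poly (map_poly of_rat q) (b::'a::field_char_0) = poly (of_int_poly P) b / of_int c"
proof -
  have "q = smult (inverse (of_int c)) (of_int_poly P)" and "c > 0"
    using rat_to_int_poly[OF assms] by auto
  then have "map_poly (of_rat :: rat \<Rightarrow> 'a) q = smult (inverse (of_int c)) (of_int_poly P)"
    by (simp add: of_rat_hom.map_poly_hom_smult of_rat_inverse map_poly_map_poly o_def)
  then show ?thesis by (simp add: field_simps)
qed

lemma QQ_ext_int_poly_quotient:
  assumes "x \<in> QQ_ext \<beta>"
  obtains P Q :: "int poly"
  where "poly (of_int_poly Q) \<beta> \<noteq> 0" and "x * poly (of_int_poly Q) \<beta> = poly (of_int_poly P) \<beta>"
proof -
  obtain p q where x: "x = poly (map_poly of_rat p) \<beta> / poly (map_poly of_rat q) \<beta>"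
    and q: "poly (map_poly of_rat q) \<beta> \<noteq> 0"
    using assms unfolding QQ_ext_def by blast
  obtain c P where cP: "rat_to_int_poly p = (c, P)" by force
  obtain d Q where dQ: "rat_to_int_poly q = (d, Q)" by force
  have "c > 0" "d > 0" using rat_to_int_poly(2) cP dQ by blast+
  show ?thesis
  proof (rule that[of "smult c Q" "smult d P"])
    show "poly (of_int_poly (smult c Q)) \<beta> \<noteq> 0"
      using q \<open>c > 0\<close> by (simp add: poly_of_rat_poly_eq_int_poly_div[OF dQ] hom_distribs)
    show "x * poly (of_int_poly (smult c Q)) \<beta> = poly (of_int_poly (smult d P)) \<beta>"
      using q \<open>c > 0\<close> \<open>d > 0\<close> unfolding x
      by (simp add: poly_of_rat_poly_eq_int_poly_div[OF cP] poly_of_rat_poly_eq_int_poly_div[OF dQ]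
          hom_distribs field_simps)
  qed
qed

lemma poly_of_int_poly_of_real:
  "poly (of_int_poly U) (of_real b :: 'a::{real_algebra_1,comm_ring_1}) = of_real (poly (of_int_poly U) b)"
proof -
  have "(of_int_poly U :: 'a poly) = map_poly of_real (of_int_poly U)"
    by (simp add: map_poly_map_poly o_def)
  then show ?thesis by (simp add: of_real_hom.poly_map_poly)
qed

lemma poly_orbit_poly_negexp:
  assumes "x * poly (of_int_poly Q) \<beta> = poly (of_int_poly P) \<beta>"
  shows "poly (of_int_poly (orbit_poly (negexp \<beta> l x) P Q n)) \<beta> = (negT \<beta> l ^^ n) x * poly (of_int_poly Q) \<beta>"
  by (rule poly_orbit_poly) (simp_all add: assms negT_funpow_Suc del: funpow.simps(2))

lemma orbit_poly_negexp_bounded: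
  fixes z :: complex
  assumes "0 \<le> \<beta>" and "-1 < l" "l \<le> 0" and "l \<le> x" "x < l + 1"
    and "x * poly (of_int_poly Q) \<beta> = poly (of_int_poly P) \<beta>"
    and "z = of_real \<beta> \<or> cmod z < 1"
  shows "\<exists>M. \<forall>n. cmod (poly (of_int_poly (orbit_poly (negexp \<beta> l x) P Q n)) z) \<le> M"
  using assms(7)
proof
  assume z: "z = of_real \<beta>"
  have "cmod (poly (of_int_poly (orbit_poly (negexp \<beta> l x) P Q n)) z) \<le> \<bar>poly (of_int_poly Q) \<beta>\<bar>" for n
    unfolding z poly_of_int_poly_of_real poly_orbit_poly_negexp[OF assms(6)] norm_of_real abs_mult
    using abs_negT_funpow_le_1[OF assms(2-5)] by (simp add: mult_left_le_one_le)
  then show ?thesis by blast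
next
  assume "cmod z < 1"
  then show ?thesis by (rule orbit_poly_bounded_inside_unit_disc[OF _ abs_negexp_le[OF assms(1-5)]])
qed

theorem mainTheorem7:
  fixes \<beta> l x :: real
  assumes "pisot \<beta>"
    and "-1 < l" and "l \<le> 0"
    and "l \<le> x" and "x < l + 1"
    and "x \<in> QQ_ext \<beta>"
  shows "eventually_periodic (negexp \<beta> l x)"
proof -
  obtain p :: "int poly" where "\<beta> > 1" "monic p" "irreducible p"
    and root: "poly (of_int_poly p) (complex_of_real \<beta>) = 0"
    and conj: "\<And>z. poly (of_int_poly p) z = 0 \<Longrightarrow> z \<noteq> complex_of_real \<beta> \<Longrightarrow> cmod z < 1"
    using assms(1) unfolding pisot_def by blast
  obtain P Q where Q: "poly (of_int_poly Q) \<beta> \<noteq> 0"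
    and x: "x * poly (of_int_poly Q) \<beta> = poly (of_int_poly P) \<beta>"
    using QQ_ext_int_poly_quotient[OF assms(6)] .
  let ?U = "orbit_poly (negexp \<beta> l x) P Q" and ?Z = "{z::complex. poly (of_int_poly p) z = 0}"
  have "finite ?Z" using \<open>monic p\<close> by (intro poly_roots_finite) auto
  moreover have "card ?Z = degree p" by (rule card_roots_irreducible_int_poly[OF \<open>irreducible p\<close>])
  moreover have "?Z \<noteq> {}" using root by blast
  ultimately have "0 < degree p" using card_gt_0_iff[of ?Z] by simp
  have "\<exists>m n. m < n \<and> (\<forall>z\<in>?Z. poly (of_int_poly (?U m)) z = poly (of_int_poly (?U n)) z)"
  proof (rule bounded_on_roots_imp_agree_on_roots[OF \<open>monic p\<close> \<open>0 < degree p\<close> \<open>card ?Z = degree p\<close>])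
    fix z assume "z \<in> ?Z"
    then have "z = complex_of_real \<beta> \<or> cmod z < 1" using conj by blast
    then show "\<exists>M. \<forall>n. cmod (poly (of_int_poly (?U n)) z) \<le> M"
      using \<open>\<beta> > 1\<close> orbit_poly_negexp_bounded[OF _ assms(2-5) x] by simp
  qed
  then obtain m n where "m < n" and "poly (of_int_poly (?U m)) (complex_of_real \<beta>) = poly (of_int_poly (?U n)) (complex_of_real \<beta>)"
    using root by blast
  then have "(negT \<beta> l ^^ m) x = (negT \<beta> l ^^ n) x"
    using Q by (simp add: poly_of_int_poly_of_real poly_orbit_poly_negexp[OF x])
  moreover have "negexp \<beta> l x = (\<lambda>k. \<lfloor>- \<beta> * (negT \<beta> l ^^ k) x - l\<rfloor>)"
    by (simp add: negexp_def fun_eq_iff)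
  ultimately show ?thesis
    using eventually_periodic_if_orbit_repeats[OF \<open>m < n\<close>, where g = "\<lambda>y. \<lfloor>- \<beta> * y - l\<rfloor>"] by simp
qed

end
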